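(* Let $\tilde H$ be a Hermitian operator on a finite-dimensional Hilbert space, let $|\tilde\psi\rangle$ be a nondegenerate eigenstate of $\tilde H$, and let $\{\omega_j\}$ be the energy differences between its eigenvalue and the other eigenvalues of $\tilde H$. Let $T$ be a real random variable with characteristic function $\Phi(\omega)=\mathbb E[e^{i\omega T}]$ and suppose $\sup_{\omega_j}|\Phi(\omega_j)|=\epsilon$. Let $n\ge 1$ and let $T'$ be the sum of $n$ independent copies of $T$. Then there exists a quantum operation $\mathcal E$ such that for all states $\rho$, $$\|(M^{\mathcal E}-\mathcal R^{T'})(\rho)\|_{\rm tr}\le \epsilon^n,$$ where $\mathcal R^{T'}(\rho)=\mathbb E\big[e^{-i\tilde HT'}\rho\,e^{i\tilde HT'}\big]$ and $M^{\mathcal E}(\rho)=P\rho P+\mathcal E\big((\mathbb 1-P)\rho(\mathbb 1-P)\big)$ with $P=|\tilde\psi\rangle\langle\tilde\psi|$.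
   Context: $\|A\|_{\rm tr}=\mathrm{tr}|A|$ is the trace norm; a quantum operation is a completely positive trace-preserving map. *)

theory Defs
  imports "HOL-Analysis.Analysis" "HOL-Probability.Probability"
begin

definition cinner :: "complex^'n \<Rightarrow> complex^'n \<Rightarrow> complex" where
  "cinner v w = (\<Sum>i\<in>UNIV. cnj (v$i) * w$i)"

definition cadj :: "complex^'n^'n \<Rightarrow> complex^'n^'n" where
  "cadj A = (\<chi> i j. cnj (A$j$i))"

definition hermitian :: "complex^'n^'n \<Rightarrow> bool" where
  "hermitian A \<longleftrightarrow> cadj A = A"

definition psd :: "complex^'n^'n \<Rightarrow> bool" where
  "psd A \<longleftrightarrow> (\<forall>v. Im (cinner v (A *v v)) = 0 \<and> 0 \<le> Re (cinner v (A *v v)))"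

definition density :: "complex^'n^'n \<Rightarrow> bool" where
  "density A \<longleftrightarrow> psd A \<and> trace A = 1"

definition mabs :: "complex^'n^'n \<Rightarrow> complex^'n^'n" where
  "mabs A = (THE B. psd B \<and> B ** B = cadj A ** A)"

definition trace_norm :: "complex^'n^'n \<Rightarrow> real" where
  "trace_norm A = Re (trace (mabs A))"

definition cscale :: "complex \<Rightarrow> complex^'n^'m \<Rightarrow> complex^'n^'m" where
  "cscale c A = (\<chi> i j. c * A$i$j)"

fun mpow :: "complex^'n^'n \<Rightarrow> nat \<Rightarrow> complex^'n^'n" where
  "mpow A 0 = mat 1"
| "mpow A (Suc k) = A ** mpow A k"

definition mexp :: "complex^'n^'n \<Rightarrow> complex^'n^'n" where
  "mexp A = (\<Sum>k. cscale (1 / of_nat (fact k)) (mpow A k))"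

definition outer :: "complex^'n \<Rightarrow> complex^'n \<Rightarrow> complex^'n^'n" where
  "outer u v = (\<chi> i j. u$i * cnj (v$j))"

text \<open>Positivity of a k x k block operator (blocks n x n), i.e. an operator on C^k \<otimes> C^n.\<close>
definition block_psd :: "nat \<Rightarrow> (nat \<Rightarrow> nat \<Rightarrow> complex^'n^'n) \<Rightarrow> bool" where
  "block_psd k X \<longleftrightarrow> (\<forall>v :: nat \<Rightarrow> complex^'n.
     Im (\<Sum>a<k. \<Sum>b<k. cinner (v a) (X a b *v v b)) = 0 \<and>
     0 \<le> Re (\<Sum>a<k. \<Sum>b<k. cinner (v a) (X a b *v v b)))"

text \<open>Quantum operation: complex-linear, completely positive (id_k \<otimes> E positive for
  every ancilla dimension k), trace preserving.\<close>
definition quantum_operation :: "(complex^'n^'n \<Rightarrow> complex^'n^'n) \<Rightarrow> bool" where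
  "quantum_operation E \<longleftrightarrow>
     (\<forall>A B. E (A + B) = E A + E B) \<and>
     (\<forall>c A. E (cscale c A) = cscale c (E A)) \<and>
     (\<forall>k X. block_psd k X \<longrightarrow> block_psd k (\<lambda>a b. E (X a b))) \<and>
     (\<forall>A. trace (E A) = trace A)"

end

theory Submission
  imports Defs
begin

text \<open>Take \<open>\<E>\<close> to be the random evolution \<open>R\<close> itself. Let \<open>P\<^sub>\<mu>\<close> be the spectral projections of
  \<open>H\<close> (so \<open>P\<^sub>E\<^sub>0 = P\<close> by nondegeneracy) and \<open>\<Phi>\<^sup>n\<close> the characteristic function of \<open>T'\<close>; then
  \<open>R(\<sigma>) = \<Sum> \<Phi>\<^sup>n(\<nu> - \<mu>) P\<^sub>\<mu> \<sigma> P\<^sub>\<nu>\<close>. Pinching \<open>\<rho>\<close> to \<open>P\<rho>P + (1-P)\<rho>(1-P)\<close> deletes exactly the blocks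
  \<open>P \<rho> P\<^sub>\<nu>\<close> and \<open>P\<^sub>\<mu> \<rho> P\<close> with \<open>\<mu>, \<nu> \<noteq> E0\<close>, and leaves \<open>P\<rho>P\<close> unchanged since \<open>\<Phi>\<^sup>n(0) = 1\<close>. Hence
  \<open>M\<^sup>\<E>(\<rho>) - R(\<rho>) = -(|\<psi>\<rangle>\<langle>b| + |b\<rangle>\<langle>\<psi>|)\<close> where \<open>b = \<Sum>\<^sub>\<mu>\<^sub>\<noteq>\<^sub>E\<^sub>0 \<Phi>\<^sup>n(E0 - \<mu>) P\<^sub>\<mu> \<rho> \<psi>\<close> is orthogonal
  to \<open>\<psi>\<close>. This operator has trace norm \<open>2 \<parallel>b\<parallel>\<close>, and by orthogonality of the \<open>P\<^sub>\<mu>\<close>,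
  \<open>\<parallel>b\<parallel> \<le> \<epsilon>\<^sup>n \<parallel>(1-P)\<rho>\<psi>\<parallel> \<le> \<epsilon>\<^sup>n/2\<close> for every density matrix \<open>\<rho>\<close>. \<open>R\<close> is completely positive
  because it is an average of unitary conjugations.\<close>

section \<open>Inner products and positive matrices\<close>

lemma cinner_add_left: "cinner (x + y) z = cinner x z + cinner y z"
  unfolding cinner_def by (simp add: algebra_simps sum.distrib)

lemma cinner_add_right: "cinner x (y + z) = cinner x y + cinner x z"
  unfolding cinner_def by (simp add: algebra_simps sum.distrib)

lemma cinner_diff_left: "cinner (x - y) z = cinner x z - cinner y z"
  unfolding cinner_def by (simp add: algebra_simps sum_subtractf)

lemma cinner_diff_right: "cinner x (y - z) = cinner x y - cinner x z"
  unfolding cinner_def by (simp add: algebra_simps sum_subtractf)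

lemma cinner_minus_left: "cinner (- x) z = - cinner x z"
  unfolding cinner_def by (simp add: sum_negf)

lemma cinner_minus_right: "cinner x (- z) = - cinner x z"
  unfolding cinner_def by (simp add: sum_negf)

lemma cinner_smult_left: "cinner (c *s x) y = cnj c * cinner x y"
  unfolding cinner_def by (simp add: sum_distrib_left mult.assoc)

lemma cinner_smult_right: "cinner x (c *s y) = c * cinner x y"
  unfolding cinner_def by (simp add: sum_distrib_left algebra_simps)

lemmas cinner_simps = cinner_add_left cinner_add_right cinner_diff_left cinner_diff_right
  cinner_minus_left cinner_minus_right cinner_smult_left cinner_smult_right

lemma cinner_zero_left [simp]: "cinner 0 y = 0"
  unfolding cinner_def by simp

lemma cinner_zero_right [simp]: "cinner x 0 = 0"
  unfolding cinner_def by simp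

lemma cinner_sum_left: "cinner (sum f S) y = (\<Sum>i\<in>S. cinner (f i) y)"
  unfolding cinner_def
  by (simp add: sum_component sum_distrib_right sum_distrib_left cnj_sum) (rule sum.swap)

lemma cinner_sum_right: "cinner x (sum f S) = (\<Sum>i\<in>S. cinner x (f i))"
  unfolding cinner_def by (simp add: sum_component sum_distrib_left) (rule sum.swap)

lemma cinner_commute: "cinner y x = cnj (cinner x y)"
  unfolding cinner_def by (simp add: cnj_sum mult.commute)

lemma cinner_eq_0_commute: "cinner x y = 0 \<Longrightarrow> cinner y x = 0"
  by (simp add: cinner_commute[of y x])

lemma Re_cinner: "Re (cinner x y) = x \<bullet> y"
  unfolding cinner_def inner_vec_def inner_complex_def by (simp add: Re_sum)

lemma cinner_self: "cinner x x = complex_of_real ((norm x)\<^sup>2)"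
proof -
  have "Im (cinner x x) = 0"
    unfolding cinner_def by (simp add: Im_sum algebra_simps)
  moreover have "Re (cinner x x) = (norm x)\<^sup>2"
    by (simp add: Re_cinner power2_norm_eq_inner)
  ultimately show ?thesis by (simp add: complex_eq_iff)
qed

lemma cinner_self_eq_0 [simp]: "cinner x x = 0 \<longleftrightarrow> x = 0"
  by (simp add: cinner_self)

lemma cinner_cadj: "cinner x (A *v y) = cinner (cadj A *v x) y"
  unfolding cinner_def cadj_def matrix_vector_mult_def
  by (simp add: sum_distrib_left sum_distrib_right cnj_sum mult.assoc mult.left_commute)
     (rule sum.swap)

lemma cinner_hermitian: "hermitian H \<Longrightarrow> cinner (H *v x) y = cinner x (H *v y)"
  by (simp add: cinner_cadj hermitian_def)

lemma Im_cinner_hermitian: "hermitian H \<Longrightarrow> Im (cinner x (H *v x)) = 0"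
  by (metis Reals_cnj_iff cinner_commute cinner_hermitian complex_is_Real_iff)

lemma cadj_eqI:
  assumes "\<And>x y. cinner (B *v x) y = cinner x (A *v y)"
  shows "cadj A = B"
proof -
  have "cadj A *v x = B *v x" for x
  proof -
    have "cinner (cadj A *v x - B *v x) y = 0" for y
      using assms[of x y] by (simp add: cinner_diff_left cinner_cadj)
    from this[of "cadj A *v x - B *v x"] show ?thesis by simp
  qed
  then show ?thesis by (simp add: matrix_eq)
qed

lemma cinner_axis: "cinner (axis i 1) (A *v axis j 1) = A$i$j"
  unfolding cinner_def matrix_vector_mult_def axis_def
  by (simp add: if_distrib if_distribR sum.delta cong: if_cong)

lemma scaleR_eq_smult_of_real: "c *\<^sub>R (x::complex^'n) = complex_of_real c *s x"
  by (simp add: vec_eq_iff) (simp add: scaleR_conv_of_real)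

lemma norm_smult: "norm (c *s (x::complex^'n)) = cmod c * norm x"
  by (simp add: norm_vec_def L2_set_def norm_mult power_mult_distrib
      sum_distrib_left[symmetric] real_sqrt_mult)

lemma cscale_matrix_vector_mult: "cscale c A *v x = c *s (A *v x)"
  by (simp add: vec_eq_iff matrix_vector_mult_def cscale_def sum_distrib_left mult.assoc)

lemma sum_matrix_vector_mult: "sum f S *v x = (\<Sum>i\<in>S. f i *v (x::complex^'n))"
  by (induction S rule: infinite_finite_induct) (auto simp: matrix_vector_mult_add_rdistrib)

lemma matrix_vector_mult_sum: "A *v sum f S = (\<Sum>i\<in>S. A *v (f i::complex^'n))"
  by (induction S rule: infinite_finite_induct) (auto simp: matrix_vector_right_distrib)

lemma uminus_matrix_vector_mult: "(- A) *v x = - (A *v (x::complex^'n))"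
  by (simp add: vec_eq_iff matrix_vector_mult_def sum_negf)

lemma outer_matrix_vector_mult: "outer u v *v x = cinner v x *s u"
  by (simp add: vec_eq_iff matrix_vector_mult_def outer_def cinner_def sum_distrib_left
      mult.commute mult.left_commute)

lemma sum_matrix_mult: "(\<Sum>i\<in>S. f i) ** A = (\<Sum>i\<in>S. f i ** (A::complex^'n^'n))"
  by (simp add: matrix_eq sum_matrix_vector_mult matrix_vector_mul_assoc[symmetric])

lemma trace_outer: "trace (outer u v) = cinner v u"
  by (simp add: trace_def outer_def cinner_def mult.commute)

lemma trace_mult_outer: "trace (A ** outer u v) = cinner v (A *v u)"
  unfolding trace_def matrix_matrix_mult_def outer_def cinner_def matrix_vector_mult_def
  by (simp add: sum_distrib_left mult_ac)

lemma trace_cscale: "trace (cscale c A) = c * trace A"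
  by (simp add: trace_def cscale_def sum_distrib_left)

lemma trace_sum: "trace (\<Sum>i\<in>S. f i) = (\<Sum>i\<in>S. trace (f i :: complex^'n^'n))"
  by (induction S rule: infinite_finite_induct) (auto simp: trace_add trace_0[simplified])

lemma trace_mult_commute: "trace (A ** B) = trace (B ** (A :: complex^'n^'n))"
  unfolding trace_def matrix_matrix_mult_def by (simp add: mult.commute) (rule sum.swap)

lemma cscale_cscale: "cscale a (cscale b A) = cscale (a * b) A"
  by (simp add: cscale_def vec_eq_iff mult.assoc)

lemma cscale_sum: "cscale a (\<Sum>i\<in>S. f i) = (\<Sum>i\<in>S. cscale a (f i))"
  by (induction S rule: infinite_finite_induct) (auto simp: cscale_def vec_eq_iff distrib_left)

lemma bounded_linear_cscale_left: "bounded_linear (\<lambda>c. cscale c A)"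
proof -
  have "linear (\<lambda>c. cscale c A)"
    by (rule linearI) (simp_all add: cscale_def vec_eq_iff distrib_right mult_scaleR_left)
  then show ?thesis using linear_conv_bounded_linear by blast
qed

lemma psd_imp_hermitian:
  assumes "psd A"
  shows "hermitian A"
proof -
  have real_form: "Im (cinner v (A *v v)) = 0" for v
    using assms unfolding psd_def by blast
  have form_axis: "cinner (axis i 1 + c *s axis j 1) (A *v (axis i 1 + c *s axis j 1))
        = A$i$i + c * A$i$j + cnj c * A$j$i + cnj c * c * A$j$j" for i j c
    by (simp only: matrix_vector_right_distrib vector_scalar_commute cinner_simps cinner_axis)
       (simp add: algebra_simps)
  have diag: "Im (A$i$i) = 0" for i
    using real_form[of "axis i 1"] by (simp add: cinner_axis)
  have conj_sym: "A$i$j = cnj (A$j$i)" for i j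
  proof -
    have "Im (A$i$j + A$j$i) = 0"
      using real_form[of "axis i 1 + 1 *s axis j 1"] form_axis[of i 1 j] diag[of i] diag[of j]
      by simp
    moreover have "Re (A$i$j) - Re (A$j$i) = 0"
      using real_form[of "axis i 1 + \<i> *s axis j 1"] form_axis[of i \<i> j] diag[of i] diag[of j]
      by simp
    ultimately show ?thesis by (simp add: complex_eq_iff)
  qed
  show ?thesis
    unfolding hermitian_def cadj_def vec_eq_iff
    by (simp only: vec_lambda_beta) (metis conj_sym complex_cnj_cnj)
qed

lemma psd_add: "psd A \<Longrightarrow> psd B \<Longrightarrow> psd (A + B)"
  by (simp add: psd_def matrix_vector_mult_add_rdistrib cinner_add_right)

lemma psd_cscale_outer:
  assumes "0 \<le> r"
  shows "psd (cscale (complex_of_real r) (outer u u))"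
proof -
  have "cinner v (cscale (complex_of_real r) (outer u u) *v v)
      = complex_of_real r * (cinner u v * cnj (cinner u v))" for v
    by (simp add: cscale_matrix_vector_mult outer_matrix_vector_mult cinner_smult_right
        cinner_commute[of v u])
  then show ?thesis
    using assms by (simp add: psd_def flip: complex_norm_square)
qed

lemma trace_psd_nonneg:
  assumes "psd A"
  shows "0 \<le> Re (trace A)"
proof -
  have "trace A = (\<Sum>i\<in>UNIV. cinner (axis i 1) (A *v axis i 1))"
    by (simp add: trace_def cinner_axis)
  then show ?thesis using assms unfolding psd_def by (simp add: Re_sum sum_nonneg)
qed

section \<open>Spectral decomposition of a Hermitian matrix\<close>

text \<open>Only real eigenvalues are considered; for Hermitian matrices these are all of them.\<close>

definition in_eigenspace :: "complex^'n^'n \<Rightarrow> real \<Rightarrow> complex^'n \<Rightarrow> bool" where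
  "in_eigenspace H \<mu> v \<longleftrightarrow> H *v v = complex_of_real \<mu> *s v"

definition eigenvalues :: "complex^'n^'n \<Rightarrow> real set" where
  "eigenvalues H = {\<mu>. \<exists>v. v \<noteq> 0 \<and> in_eigenspace H \<mu> v}"

lemma in_eigenspace_0 [simp]: "in_eigenspace H \<mu> 0"
  by (simp add: in_eigenspace_def)

lemma in_eigenspace_add: "in_eigenspace H \<mu> x \<Longrightarrow> in_eigenspace H \<mu> y \<Longrightarrow> in_eigenspace H \<mu> (x + y)"
  by (simp add: in_eigenspace_def matrix_vector_right_distrib vector_add_ldistrib)

lemma in_eigenspace_smult: "in_eigenspace H \<mu> x \<Longrightarrow> in_eigenspace H \<mu> (c *s x)"
  by (simp add: in_eigenspace_def vector_scalar_commute vector_smult_assoc mult.commute)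

lemma in_eigenspace_matrix_vector_mult: "in_eigenspace H \<mu> x \<Longrightarrow> in_eigenspace H \<mu> (H *v x)"
  by (simp add: in_eigenspace_def vector_scalar_commute)

lemma in_eigenspace_not_eigenvalue: "in_eigenspace H \<mu> v \<Longrightarrow> \<mu> \<notin> eigenvalues H \<Longrightarrow> v = 0"
  by (auto simp: eigenvalues_def)

lemma eigenspaces_orthogonal:
  assumes "hermitian H" "in_eigenspace H \<mu> v" "in_eigenspace H \<nu> w" "\<mu> \<noteq> \<nu>"
  shows "cinner v w = 0"
proof -
  have "cinner v (H *v w) = complex_of_real \<nu> * cinner v w"
    using assms by (simp add: in_eigenspace_def cinner_smult_right)
  moreover have "cinner (H *v v) w = complex_of_real \<mu> * cinner v w"
    using assms by (simp add: in_eigenspace_def cinner_smult_left)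
  ultimately have "(complex_of_real \<nu> - complex_of_real \<mu>) * cinner v w = 0"
    using cinner_hermitian[OF assms(1), of v w] by (simp add: algebra_simps)
  then show ?thesis using assms(4) by simp
qed

lemma finite_eigenvalues:
  assumes h: "hermitian H"
  shows "finite (eigenvalues H)"
proof -
  define g where "g \<mu> = (SOME v. v \<noteq> 0 \<and> in_eigenspace H \<mu> v)" for \<mu>
  have g: "g \<mu> \<noteq> 0 \<and> in_eigenspace H \<mu> (g \<mu>)" if "\<mu> \<in> eigenvalues H" for \<mu>
    using that unfolding g_def eigenvalues_def by (metis (mono_tags, lifting) mem_Collect_eq someI_ex)
  have orth: "cinner (g \<mu>) (g \<nu>) = 0" if "\<mu> \<in> eigenvalues H" "\<nu> \<in> eigenvalues H" "\<mu> \<noteq> \<nu>" for \<mu> \<nu>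
    using eigenspaces_orthogonal[OF h] g that by blast
  have inj: "inj_on g (eigenvalues H)"
    by (rule inj_onI) (metis orth g cinner_self_eq_0)
  have "pairwise orthogonal (g ` eigenvalues H)"
    unfolding pairwise_def orthogonal_def
  proof clarify
    fix \<mu> \<nu> assume "\<mu> \<in> eigenvalues H" "\<nu> \<in> eigenvalues H" "g \<mu> \<noteq> g \<nu>"
    then show "g \<mu> \<bullet> g \<nu> = 0" using orth[of \<mu> \<nu>] by (metis Re_cinner zero_complex.simps(1))
  qed
  moreover have "0 \<notin> g ` eigenvalues H" using g by auto
  ultimately have "independent (g ` eigenvalues H)" by (rule pairwise_orthogonal_independent)
  then have "finite (g ` eigenvalues H)" using independent_bound by blast
  then show ?thesis using inj finite_imageD by blast
qed

lemma linear_le_quadratic_imp_zero: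
  fixes m K :: real
  assumes "\<And>t. 2 * t * m \<le> t\<^sup>2 * K" "0 \<le> m"
  shows "m = 0"
proof (rule ccontr)
  assume "m \<noteq> 0"
  then have m: "m > 0" using assms by simp
  define t where "t = m / (\<bar>K\<bar> + 1)"
  have t: "t > 0" using m by (simp add: t_def)
  have "2 * t * m \<le> t\<^sup>2 * \<bar>K\<bar>"
    using assms(1)[of t] by (smt (verit) mult_left_mono abs_ge_self zero_le_power2)
  then have "2 * m \<le> t * \<bar>K\<bar>" using t by (simp add: power2_eq_square)
  also have "t * \<bar>K\<bar> < m" unfolding t_def using m by (simp add: field_simps)
  finally show False using m by simp
qed

text \<open>A maximiser of the Rayleigh quotient on an invariant complex subspace is an eigenvector:
  perturbing it by \<open>t\<close> times the component \<open>u\<close> of \<open>H w\<close> orthogonal to \<open>w\<close> would otherwise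
  increase the quotient to first order in \<open>t\<close>.\<close>

lemma rayleigh_maximizer_in_eigenspace:
  fixes H :: "complex^'n^'n"
  assumes h: "hermitian H" and V: "subspace V" "\<And>c x. x \<in> V \<Longrightarrow> c *s x \<in> V"
    "\<And>x. x \<in> V \<Longrightarrow> H *v x \<in> V"
    and w: "w \<in> V" "norm w = 1"
    and max: "\<And>x. x \<in> V \<Longrightarrow> Re (cinner x (H *v x)) \<le> Re (cinner w (H *v w)) * (norm x)\<^sup>2"
  shows "in_eigenspace H (Re (cinner w (H *v w))) w"
proof -
  define lam where "lam = Re (cinner w (H *v w))"
  have ww: "cinner w w = 1" using w by (simp add: cinner_self)
  have lam: "cinner w (H *v w) = complex_of_real lam"
    using Im_cinner_hermitian[OF h, of w] by (simp add: lam_def complex_eq_iff)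
  define u where "u = H *v w - complex_of_real lam *s w"
  have u: "u \<in> V" unfolding u_def using V w by (intro subspace_diff) auto
  have wu: "cinner w u = 0" unfolding u_def by (simp add: cinner_simps lam ww)
  have uw: "cinner u w = 0" using cinner_eq_0_commute[OF wu] .
  have Hw: "H *v w = u + complex_of_real lam *s w" unfolding u_def by simp
  define m where "m = (norm u)\<^sup>2"
  have uu: "cinner u u = complex_of_real m" by (simp add: m_def cinner_self)
  have uHw: "cinner u (H *v w) = complex_of_real m"
    by (simp add: Hw cinner_simps uw uu)
  have wHu: "cinner w (H *v u) = complex_of_real m"
    by (simp add: cinner_hermitian[OF h, symmetric] Hw cinner_simps wu uu)
  have "2 * t * m \<le> t\<^sup>2 * (lam * m - Re (cinner u (H *v u)))" for t
  proof -
    let ?x = "w + complex_of_real t *s u"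
    have "?x \<in> V" using V w u by (intro subspace_add) auto
    moreover have "Re (cinner ?x (H *v ?x)) = lam + 2 * t * m + t\<^sup>2 * Re (cinner u (H *v u))"
      by (simp add: matrix_vector_right_distrib vector_scalar_commute cinner_simps uHw wHu lam
          power2_eq_square algebra_simps)
    moreover have "(norm ?x)\<^sup>2 = 1 + t\<^sup>2 * m"
    proof -
      have "cinner ?x ?x = 1 + complex_of_real (t\<^sup>2 * m)"
        by (simp add: cinner_simps ww wu uw uu power2_eq_square)
      then have "Re (cinner ?x ?x) = 1 + t\<^sup>2 * m" by simp
      then show ?thesis by (simp add: cinner_self)
    qed
    ultimately show ?thesis using max[of ?x] by (simp add: lam_def algebra_simps)
  qed
  then have "m = 0" by (rule linear_le_quadratic_imp_zero) (simp add: m_def)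
  then show ?thesis using Hw by (simp add: m_def in_eigenspace_def lam_def)
qed

lemma hermitian_invariant_subspace_has_eigenvector:
  fixes H :: "complex^'n^'n"
  assumes h: "hermitian H" and V: "subspace V" "\<And>c x. x \<in> V \<Longrightarrow> c *s x \<in> V"
    "\<And>x. x \<in> V \<Longrightarrow> H *v x \<in> V"
    and z: "z \<in> V" "z \<noteq> 0"
  obtains w \<mu> where "w \<in> V" "w \<noteq> 0" "in_eigenspace H \<mu> w"
proof -
  define q where "q x = Re (cinner x (H *v x))" for x
  define S where "S = V \<inter> sphere 0 1"
  have normalize: "complex_of_real (1 / norm x) *s x \<in> S" if "x \<in> V" "x \<noteq> 0" for x
    using that V by (simp add: S_def norm_smult norm_divide)
  have "compact S"
    unfolding S_def using closed_subspace[OF V(1)] by (intro closed_Int_compact compact_sphere)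
  moreover have "S \<noteq> {}" using normalize[OF z] by blast
  moreover have "continuous_on S q"
    unfolding q_def cinner_def matrix_vector_mult_def by (intro continuous_intros)
  ultimately obtain w where w: "w \<in> S" and wmax: "\<And>y. y \<in> S \<Longrightarrow> q y \<le> q w"
    by (metis continuous_attains_sup)
  have "q x \<le> q w * (norm x)\<^sup>2" if "x \<in> V" for x
  proof (cases "x = 0")
    case False
    let ?r = "1 / norm x"
    have "q (complex_of_real ?r *s x) = ?r\<^sup>2 * q x"
      by (simp add: q_def vector_scalar_commute cinner_smult_left cinner_smult_right power2_eq_square)
    then have "?r\<^sup>2 * q x \<le> q w" using wmax[OF normalize[OF that False]] by simp
    then show ?thesis using False by (simp add: field_simps)
  qed (simp add: q_def)
  then have "in_eigenspace H (q w) w"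
    using w unfolding q_def S_def by (intro rayleigh_maximizer_in_eigenspace[OF h V]) auto
  moreover have "w \<noteq> 0" using w by (auto simp: S_def)
  ultimately show ?thesis using that w by (auto simp: S_def)
qed

text \<open>The set of sums of eigenvectors is a complex subspace invariant under \<open>H\<close>; its orthogonal
  complement is invariant as well, and contains no eigenvector, hence is trivial.\<close>

lemma eigen_decomposition_exists:
  fixes H :: "complex^'n^'n"
  assumes h: "hermitian H"
  obtains f where "v = (\<Sum>\<mu>\<in>eigenvalues H. f \<mu>)" "\<And>\<mu>. in_eigenspace H \<mu> (f \<mu>)"
proof -
  define D where
    "D = {v. \<exists>f. v = (\<Sum>\<mu>\<in>eigenvalues H. f \<mu>) \<and> (\<forall>\<mu>. in_eigenspace H \<mu> (f \<mu>))}"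
  have eigvec_D: "v \<in> D" if "in_eigenspace H \<mu> v" for \<mu> v
  proof (cases "\<mu> \<in> eigenvalues H")
    case True
    then show ?thesis unfolding D_def using that finite_eigenvalues[OF h]
      by (intro CollectI exI[of _ "(\<lambda>_. 0)(\<mu> := v)"]) (auto simp: sum.delta)
  next
    case False
    then show ?thesis unfolding D_def using that in_eigenspace_not_eigenvalue
      by (intro CollectI exI[of _ "\<lambda>_. 0"]) auto
  qed
  have D_image: "(\<lambda>x. g x) ` D \<subseteq> D"
    if "\<And>\<mu> x. in_eigenspace H \<mu> x \<Longrightarrow> in_eigenspace H \<mu> (g x)"
      and "\<And>f. g (\<Sum>\<mu>\<in>eigenvalues H. f \<mu>) = (\<Sum>\<mu>\<in>eigenvalues H. g (f \<mu>))" for g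
    using that unfolding D_def by force
  have D_smult: "c *s x \<in> D" if "x \<in> D" for c x
    using D_image[of "\<lambda>x. c *s x"] that by (auto simp: in_eigenspace_smult vec.scale_sum_right)
  have D_H: "H *v x \<in> D" if "x \<in> D" for x
    using D_image[of "\<lambda>x. H *v x"] that
    by (auto simp: in_eigenspace_matrix_vector_mult matrix_vector_mult_sum)
  have "subspace D"
    unfolding subspace_def
  proof (intro conjI ballI allI)
    show "0 \<in> D" using eigvec_D[of _ 0] by simp
    show "x + y \<in> D" if xy: "x \<in> D" "y \<in> D" for x y
    proof -
      obtain f g where "x = (\<Sum>\<mu>\<in>eigenvalues H. f \<mu>)" "\<forall>\<mu>. in_eigenspace H \<mu> (f \<mu>)"
        "y = (\<Sum>\<mu>\<in>eigenvalues H. g \<mu>)" "\<forall>\<mu>. in_eigenspace H \<mu> (g \<mu>)"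
        using xy unfolding D_def by blast
      then show ?thesis unfolding D_def
        by (auto simp: sum.distrib intro!: exI[of _ "\<lambda>\<mu>. f \<mu> + g \<mu>"] in_eigenspace_add)
    qed
    show "c *\<^sub>R x \<in> D" if "x \<in> D" for c x
      using D_smult[OF that] by (simp add: scaleR_eq_smult_of_real)
  qed
  have "D = UNIV"
  proof (rule ccontr)
    assume "D \<noteq> UNIV"
    moreover have span_D: "span D = D" using \<open>subspace D\<close> by (rule span_eq_iff[THEN iffD2])
    ultimately have "dim D < DIM(complex^'n)"
      using dim_eq_full[of D] dim_subset_UNIV[of D] by (simp add: span_D order_less_le)
    then obtain z where z: "z \<noteq> 0" "\<And>y. y \<in> span D \<Longrightarrow> orthogonal z y"
      by (rule orthogonal_to_subspace_exists) blast
    define V where "V = {x. \<forall>y\<in>D. cinner y x = 0}"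
    have zV: "z \<in> V"
    proof -
      have "cinner y z = 0" if "y \<in> D" for y
      proof -
        have "Re (cinner y z) = 0" and "Re (cinner (\<i> *s y) z) = 0"
          using z(2) that D_smult[OF that, of \<i>]
          by (simp_all add: span_D Re_cinner orthogonal_def inner_commute[of z])
        then show ?thesis by (simp add: cinner_smult_left complex_eq_iff)
      qed
      then show ?thesis by (simp add: V_def)
    qed
    have V_subspace: "subspace V"
      by (auto simp: subspace_def V_def cinner_add_right scaleR_eq_smult_of_real cinner_smult_right)
    have V_smult: "c *s x \<in> V" if "x \<in> V" for c x
      using that by (simp add: V_def cinner_smult_right)
    have V_H: "H *v x \<in> V" if "x \<in> V" for x
      using that D_H by (simp add: V_def flip: cinner_hermitian[OF h])
    obtain w \<mu> where w: "w \<in> V" "w \<noteq> 0" "in_eigenspace H \<mu> w"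
      by (rule hermitian_invariant_subspace_has_eigenvector[OF h V_subspace V_smult V_H zV z(1)])
    then have "cinner w w = 0" using eigvec_D[OF w(3)] by (simp add: V_def)
    then show False using w(2) by simp
  qed
  then show ?thesis using that unfolding D_def by blast
qed

lemma eigen_decomposition_unique:
  assumes h: "hermitian H" and L: "finite L"
    and eq: "(\<Sum>\<mu>\<in>L. f \<mu>) = (\<Sum>\<mu>\<in>L. g \<mu>)"
    and f: "\<And>\<mu>. in_eigenspace H \<mu> (f \<mu>)" and g: "\<And>\<mu>. in_eigenspace H \<mu> (g \<mu>)"
    and \<mu>: "\<mu> \<in> L"
  shows "f \<mu> = g \<mu>"
proof -
  define d where "d \<nu> = f \<nu> - g \<nu>" for \<nu>
  have d: "in_eigenspace H \<nu> (d \<nu>)" for \<nu>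
    using f g unfolding d_def in_eigenspace_def
    by (simp add: matrix_vector_mult_diff_distrib vector_ssub_ldistrib)
  have "0 = cinner (d \<mu>) (\<Sum>\<nu>\<in>L. d \<nu>)"
    using eq by (simp add: d_def sum_subtractf)
  also have "\<dots> = (\<Sum>\<nu>\<in>L. cinner (d \<mu>) (d \<nu>))" by (rule cinner_sum_right)
  also have "\<dots> = cinner (d \<mu>) (d \<mu>)"
    using eigenspaces_orthogonal[OF h d d] by (subst sum.remove[OF L \<mu>]) (auto intro!: sum.neutral)
  finally show ?thesis by (simp add: d_def)
qed

text \<open>The \<open>\<mu>\<close>-part of \<open>v\<close> in its eigendecomposition; the choice is unique for Hermitian \<open>H\<close>.\<close>

definition eigencomponent :: "complex^'n^'n \<Rightarrow> real \<Rightarrow> complex^'n \<Rightarrow> complex^'n" where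
  "eigencomponent H \<mu> v =
     (SOME f. v = (\<Sum>\<nu>\<in>eigenvalues H. f \<nu>) \<and> (\<forall>\<nu>. in_eigenspace H \<nu> (f \<nu>))) \<mu>"

context
  fixes H :: "complex^'n^'n"
  assumes h: "hermitian H"
begin

lemma eigencomponent_spec:
  "v = (\<Sum>\<nu>\<in>eigenvalues H. eigencomponent H \<nu> v) \<and> (\<forall>\<nu>. in_eigenspace H \<nu> (eigencomponent H \<nu> v))"
proof -
  have "\<exists>f. v = (\<Sum>\<nu>\<in>eigenvalues H. f \<nu>) \<and> (\<forall>\<nu>. in_eigenspace H \<nu> (f \<nu>))"
    using eigen_decomposition_exists[OF h, where v = v] by metis
  then show ?thesis unfolding eigencomponent_def by (rule someI_ex)
qed

lemma sum_eigencomponent: "(\<Sum>\<nu>\<in>eigenvalues H. eigencomponent H \<nu> v) = v"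
  using eigencomponent_spec by metis

lemma in_eigenspace_eigencomponent: "in_eigenspace H \<nu> (eigencomponent H \<nu> v)"
  using eigencomponent_spec by blast

lemma matrix_vector_mult_eigencomponent:
  "H *v eigencomponent H \<nu> v = complex_of_real \<nu> *s eigencomponent H \<nu> v"
  using in_eigenspace_eigencomponent in_eigenspace_def by blast

lemma eigencomponent_not_eigenvalue: "\<mu> \<notin> eigenvalues H \<Longrightarrow> eigencomponent H \<mu> v = 0"
  using in_eigenspace_eigencomponent in_eigenspace_not_eigenvalue by blast

lemma eigencomponent_eqI:
  assumes "v = (\<Sum>\<nu>\<in>eigenvalues H. f \<nu>)" "\<And>\<nu>. in_eigenspace H \<nu> (f \<nu>)"
  shows "eigencomponent H \<mu> v = f \<mu>"
proof (cases "\<mu> \<in> eigenvalues H")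
  case True
  show ?thesis
    by (rule eigen_decomposition_unique[OF h finite_eigenvalues[OF h] _ _ assms(2) True])
       (use assms(1) sum_eigencomponent in_eigenspace_eigencomponent in auto)
next
  case False
  then show ?thesis using eigencomponent_not_eigenvalue assms(2) in_eigenspace_not_eigenvalue by metis
qed

lemma eigencomponent_add: "eigencomponent H \<mu> (x + y) = eigencomponent H \<mu> x + eigencomponent H \<mu> y"
  by (rule eigencomponent_eqI)
     (auto simp: sum.distrib sum_eigencomponent intro: in_eigenspace_add in_eigenspace_eigencomponent)

lemma eigencomponent_smult: "eigencomponent H \<mu> (c *s x) = c *s eigencomponent H \<mu> x"
  by (rule eigencomponent_eqI)
     (auto simp: vec.scale_sum_right[symmetric] sum_eigencomponent
       intro: in_eigenspace_smult in_eigenspace_eigencomponent)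

lemma eigencomponent_0: "eigencomponent H \<mu> 0 = 0"
  by (rule eigencomponent_eqI) auto

lemma eigencomponent_diff: "eigencomponent H \<mu> (x - y) = eigencomponent H \<mu> x - eigencomponent H \<mu> y"
  using eigencomponent_add[of \<mu> x "- y"] eigencomponent_smult[of \<mu> "-1" y]
  by (simp add: vector_sneg_minus1[symmetric])

lemma eigencomponent_sum:
  "eigencomponent H \<mu> (\<Sum>j\<in>S. g j) = (\<Sum>j\<in>S. eigencomponent H \<mu> (g j))"
  by (induction S rule: infinite_finite_induct) (auto simp: eigencomponent_0 eigencomponent_add)

lemma eigencomponent_in_eigenspace:
  assumes "in_eigenspace H \<nu> v"
  shows "eigencomponent H \<mu> v = (if \<mu> = \<nu> then v else 0)"
proof (cases "\<nu> \<in> eigenvalues H")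
  case True
  show ?thesis
    by (rule eigencomponent_eqI) (use True assms finite_eigenvalues[OF h] in \<open>auto simp: sum.delta\<close>)
next
  case False
  then have "v = 0" using assms in_eigenspace_not_eigenvalue by blast
  then show ?thesis by (simp add: eigencomponent_0)
qed

lemma eigencomponent_eigencomponent:
  "eigencomponent H \<mu> (eigencomponent H \<nu> x) = (if \<mu> = \<nu> then eigencomponent H \<nu> x else 0)"
  using eigencomponent_in_eigenspace[OF in_eigenspace_eigencomponent] by blast

lemma eigencomponents_orthogonal:
  "\<mu> \<noteq> \<nu> \<Longrightarrow> cinner (eigencomponent H \<mu> x) (eigencomponent H \<nu> y) = 0"
  using eigenspaces_orthogonal[OF h in_eigenspace_eigencomponent in_eigenspace_eigencomponent] by blast

lemma cinner_eigencomponent_left_eq_diag: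
  "cinner (eigencomponent H \<mu> x) y = cinner (eigencomponent H \<mu> x) (eigencomponent H \<mu> y)"
proof (cases "\<mu> \<in> eigenvalues H")
  case True
  have "cinner (eigencomponent H \<mu> x) y
      = (\<Sum>\<nu>\<in>eigenvalues H. cinner (eigencomponent H \<mu> x) (eigencomponent H \<nu> y))"
    by (subst sum_eigencomponent[symmetric, of y]) (simp add: cinner_sum_right)
  also have "\<dots> = cinner (eigencomponent H \<mu> x) (eigencomponent H \<mu> y)"
    by (subst sum.remove[OF finite_eigenvalues[OF h] True])
       (auto intro!: sum.neutral eigencomponents_orthogonal)
  finally show ?thesis .
qed (simp add: eigencomponent_not_eigenvalue)

lemma cinner_eigencomponent: "cinner (eigencomponent H \<mu> x) y = cinner x (eigencomponent H \<mu> y)"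
  using cinner_eigencomponent_left_eq_diag[of \<mu> x y] cinner_eigencomponent_left_eq_diag[of \<mu> y x]
  by (metis cinner_commute)

definition eigenprojector :: "real \<Rightarrow> complex^'n^'n" where
  "eigenprojector \<mu> = (\<chi> i j. eigencomponent H \<mu> (axis j 1) $ i)"

lemma eigenprojector_matrix_vector_mult: "eigenprojector \<mu> *v x = eigencomponent H \<mu> x"
proof -
  have "eigencomponent H \<mu> x = eigencomponent H \<mu> (\<Sum>j\<in>UNIV. x$j *s axis j 1)"
    by (simp add: basis_expansion)
  also have "\<dots> = (\<Sum>j\<in>UNIV. x$j *s eigencomponent H \<mu> (axis j 1))"
    by (simp add: eigencomponent_sum eigencomponent_smult)
  finally show ?thesis
    by (simp add: vec_eq_iff eigenprojector_def matrix_vector_mult_def sum_component mult.commute)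
qed

lemma eigenprojector_mult: "eigenprojector \<mu> ** eigenprojector \<nu> = (if \<mu> = \<nu> then eigenprojector \<mu> else 0)"
  by (simp add: matrix_eq matrix_vector_mul_assoc[symmetric] eigenprojector_matrix_vector_mult
      eigencomponent_eigencomponent)

lemma sum_eigenprojector: "(\<Sum>\<mu>\<in>eigenvalues H. eigenprojector \<mu>) = mat 1"
  by (simp add: matrix_eq sum_matrix_vector_mult eigenprojector_matrix_vector_mult sum_eigencomponent)

lemma mpow_cscale_eigencomponent:
  "mpow (cscale z H) k *v eigencomponent H \<mu> x = (z * complex_of_real \<mu>)^k *s eigencomponent H \<mu> x"
  by (induction k)
     (simp_all add: matrix_vector_mul_assoc[symmetric] cscale_matrix_vector_mult
       matrix_vector_mult_eigencomponent vector_scalar_commute vector_smult_assoc mult_ac)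

lemma mpow_cscale:
  "mpow (cscale z H) k = (\<Sum>\<mu>\<in>eigenvalues H. cscale ((z * complex_of_real \<mu>)^k) (eigenprojector \<mu>))"
proof -
  have "mpow (cscale z H) k *v x
      = (\<Sum>\<mu>\<in>eigenvalues H. cscale ((z * complex_of_real \<mu>)^k) (eigenprojector \<mu>)) *v x" for x
    by (subst (1) sum_eigencomponent[symmetric, of x])
       (simp add: matrix_vector_mult_sum sum_matrix_vector_mult mpow_cscale_eigencomponent
         cscale_matrix_vector_mult eigenprojector_matrix_vector_mult)
  then show ?thesis by (simp add: matrix_eq)
qed

lemma mexp_cscale:
  "mexp (cscale z H) = (\<Sum>\<mu>\<in>eigenvalues H. cscale (exp (z * complex_of_real \<mu>)) (eigenprojector \<mu>))"
proof -
  have "(\<lambda>k. cscale (1 / of_nat (fact k)) (mpow (cscale z H) k))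
      = (\<lambda>k. \<Sum>\<mu>\<in>eigenvalues H. cscale ((z * complex_of_real \<mu>)^k /\<^sub>R fact k) (eigenprojector \<mu>))"
    by (simp add: mpow_cscale cscale_sum cscale_cscale scaleR_conv_of_real divide_inverse
        mult.commute)
  moreover have "(\<lambda>k. \<Sum>\<mu>\<in>eigenvalues H. cscale ((z * complex_of_real \<mu>)^k /\<^sub>R fact k) (eigenprojector \<mu>))
      sums (\<Sum>\<mu>\<in>eigenvalues H. cscale (exp (z * complex_of_real \<mu>)) (eigenprojector \<mu>))"
    by (intro sums_sum bounded_linear.sums[OF bounded_linear_cscale_left] exp_converges)
  ultimately show ?thesis unfolding mexp_def by (simp add: sums_iff)
qed

lemma norm_sum_eigencomponents_squared:
  assumes "A \<subseteq> eigenvalues H"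
  shows "(norm (\<Sum>\<mu>\<in>A. a \<mu> *s eigencomponent H \<mu> y))\<^sup>2
       = (\<Sum>\<mu>\<in>A. (cmod (a \<mu>))\<^sup>2 * (norm (eigencomponent H \<mu> y))\<^sup>2)"
proof -
  have A: "finite A" using assms finite_eigenvalues[OF h] finite_subset by blast
  have "cinner (\<Sum>\<mu>\<in>A. a \<mu> *s eigencomponent H \<mu> y) (\<Sum>\<mu>\<in>A. a \<mu> *s eigencomponent H \<mu> y)
      = (\<Sum>\<nu>\<in>A. \<Sum>\<mu>\<in>A. cnj (a \<mu>) * a \<nu> * cinner (eigencomponent H \<mu> y) (eigencomponent H \<nu> y))"
    by (simp add: cinner_sum_left cinner_sum_right cinner_smult_left cinner_smult_right
        sum_distrib_left mult_ac)
  also have "\<dots> = (\<Sum>\<mu>\<in>A. cnj (a \<mu>) * a \<mu> * cinner (eigencomponent H \<mu> y) (eigencomponent H \<mu> y))"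
    by (intro sum.cong refl, subst sum.remove[OF A], assumption)
       (auto intro!: sum.neutral simp: eigencomponents_orthogonal)
  finally have "complex_of_real ((norm (\<Sum>\<mu>\<in>A. a \<mu> *s eigencomponent H \<mu> y))\<^sup>2)
      = complex_of_real (\<Sum>\<mu>\<in>A. (cmod (a \<mu>))\<^sup>2 * (norm (eigencomponent H \<mu> y))\<^sup>2)"
    using complex_norm_square[of "a \<mu>" for \<mu>]
    by (simp add: cinner_self mult.commute[of "cnj (a _)"])
  then show ?thesis by (simp only: of_real_eq_iff)
qed

lemma norm_weighted_eigencomponents_le:
  assumes "A \<subseteq> eigenvalues H" "\<And>\<mu>. \<mu> \<in> A \<Longrightarrow> cmod (a \<mu>) \<le> c" "0 \<le> c"
  shows "norm (\<Sum>\<mu>\<in>A. a \<mu> *s eigencomponent H \<mu> y) \<le> c * norm (\<Sum>\<mu>\<in>A. eigencomponent H \<mu> y)"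
proof (rule power2_le_imp_le)
  have "(norm (\<Sum>\<mu>\<in>A. a \<mu> *s eigencomponent H \<mu> y))\<^sup>2
      \<le> (\<Sum>\<mu>\<in>A. c\<^sup>2 * (norm (eigencomponent H \<mu> y))\<^sup>2)"
    unfolding norm_sum_eigencomponents_squared[OF assms(1)] using assms(2,3)
    by (intro sum_mono mult_right_mono power_mono) auto
  also have "\<dots> = (c * norm (\<Sum>\<mu>\<in>A. eigencomponent H \<mu> y))\<^sup>2"
    using norm_sum_eigencomponents_squared[OF assms(1), of "\<lambda>_. 1"]
    by (simp add: power_mult_distrib sum_distrib_left)
  finally show "(norm (\<Sum>\<mu>\<in>A. a \<mu> *s eigencomponent H \<mu> y))\<^sup>2
      \<le> (c * norm (\<Sum>\<mu>\<in>A. eigencomponent H \<mu> y))\<^sup>2" .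
qed (use assms(3) in simp)

end

section \<open>The random evolution channel\<close>

text \<open>\<open>\<sigma> \<mapsto> E[exp(-iHT) \<sigma> exp(iHT)]\<close> for \<open>T\<close> of distribution \<open>D\<close>, written in the eigenbasis of \<open>H\<close>.\<close>

definition random_evolution :: "complex^'n^'n \<Rightarrow> real measure \<Rightarrow> complex^'n^'n \<Rightarrow> complex^'n^'n" where
  "random_evolution H D \<sigma> = (\<Sum>\<mu>\<in>eigenvalues H. \<Sum>\<nu>\<in>eigenvalues H.
     cscale (char D (\<nu> - \<mu>)) (eigenprojector H \<mu> ** \<sigma> ** eigenprojector H \<nu>))"

lemma char_cnj: "cnj (char D t) = char D (- t)"
proof -
  have "cnj (char D t) = (\<integral>x. cnj (exp (\<i> * complex_of_real (t * x))) \<partial>D)"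
    unfolding char_def by (rule Bochner_Integration.integral_cnj[symmetric])
  also have "\<dots> = char D (- t)"
    unfolding char_def by (simp del: Bochner_Integration.integral_cnj add: exp_cnj)
  finally show ?thesis .
qed

context
  fixes H :: "complex^'n^'n"
  assumes h: "hermitian H"
begin

lemma random_evolution_matrix_vector_mult:
  "random_evolution H D \<sigma> *v x = (\<Sum>\<mu>\<in>eigenvalues H. \<Sum>\<nu>\<in>eigenvalues H.
     char D (\<nu> - \<mu>) *s eigencomponent H \<mu> (\<sigma> *v eigencomponent H \<nu> x))"
  by (simp add: random_evolution_def sum_matrix_vector_mult cscale_matrix_vector_mult
      matrix_vector_mul_assoc[symmetric] eigenprojector_matrix_vector_mult[OF h])

lemma mexp_conjugation:
  "mexp (cscale (- \<i> * complex_of_real s) H) ** \<rho> ** mexp (cscale (\<i> * complex_of_real s) H)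
    = (\<Sum>\<mu>\<in>eigenvalues H. \<Sum>\<nu>\<in>eigenvalues H.
        cscale (exp (\<i> * complex_of_real ((\<nu> - \<mu>) * s))) (eigenprojector H \<mu> ** \<rho> ** eigenprojector H \<nu>))"
proof -
  define a where "a \<mu> = exp ((- \<i> * complex_of_real s) * complex_of_real \<mu>)" for \<mu>
  define b where "b \<mu> = exp ((\<i> * complex_of_real s) * complex_of_real \<mu>)" for \<mu>
  have ab: "a \<mu> * b \<nu> = exp (\<i> * complex_of_real ((\<nu> - \<mu>) * s))" for \<mu> \<nu>
    unfolding a_def b_def by (simp add: exp_add[symmetric] algebra_simps)
  have "(mexp (cscale (- \<i> * complex_of_real s) H) ** \<rho> ** mexp (cscale (\<i> * complex_of_real s) H)) *v x
    = (\<Sum>\<mu>\<in>eigenvalues H. a \<mu> *s eigencomponent H \<mu> (\<rho> *v (\<Sum>\<nu>\<in>eigenvalues H. b \<nu> *s eigencomponent H \<nu> x)))"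
    for x
    unfolding mexp_cscale[OF h] a_def b_def
    by (simp add: matrix_vector_mul_assoc[symmetric] sum_matrix_vector_mult cscale_matrix_vector_mult
        eigenprojector_matrix_vector_mult[OF h])
  also have "\<dots> x = (\<Sum>\<mu>\<in>eigenvalues H. \<Sum>\<nu>\<in>eigenvalues H.
      (a \<mu> * b \<nu>) *s eigencomponent H \<mu> (\<rho> *v eigencomponent H \<nu> x))" for x
    by (simp add: matrix_vector_mult_sum vector_scalar_commute eigencomponent_sum[OF h]
        eigencomponent_smult[OF h] vec.scale_sum_right vector_smult_assoc)
  finally show ?thesis
    by (simp add: matrix_eq ab sum_matrix_vector_mult cscale_matrix_vector_mult
        matrix_vector_mul_assoc[symmetric] eigenprojector_matrix_vector_mult[OF h])
qed

lemma integral_mexp_conjugation: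
  assumes M: "prob_space M" and c: "c \<in> borel_measurable M"
  shows "(\<integral>x. mexp (cscale (- \<i> * complex_of_real (c x)) H) ** \<rho>
                 ** mexp (cscale (\<i> * complex_of_real (c x)) H) \<partial>M)
    = random_evolution H (distr M borel c) \<rho>"
proof -
  have int: "integrable M (\<lambda>x. exp (\<i> * complex_of_real (t * c x)))" for t
    by (rule prob_space.integrable_iexp[OF M]) (use c in auto)
  define f where "f \<mu> \<nu> x = cscale (exp (\<i> * complex_of_real ((\<nu> - \<mu>) * c x)))
    (eigenprojector H \<mu> ** \<rho> ** eigenprojector H \<nu>)" for \<mu> \<nu> x
  have int_f: "integrable M (f \<mu> \<nu>)" for \<mu> \<nu>
    unfolding f_def by (rule integrable_bounded_linear[OF bounded_linear_cscale_left int])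
  have char: "char (distr M borel c) t = (\<integral>x. exp (\<i> * complex_of_real (t * c x)) \<partial>M)" for t
    unfolding char_def by (subst integral_distr) (use c in auto)
  have "(\<integral>x. mexp (cscale (- \<i> * complex_of_real (c x)) H) ** \<rho>
                 ** mexp (cscale (\<i> * complex_of_real (c x)) H) \<partial>M)
     = (\<integral>x. (\<Sum>\<mu>\<in>eigenvalues H. \<Sum>\<nu>\<in>eigenvalues H. f \<mu> \<nu> x) \<partial>M)"
    unfolding f_def by (intro Bochner_Integration.integral_cong refl mexp_conjugation)
  also have "\<dots> = (\<Sum>\<mu>\<in>eigenvalues H. \<Sum>\<nu>\<in>eigenvalues H. (\<integral>x. f \<mu> \<nu> x \<partial>M))"
    by (simp add: Bochner_Integration.integral_sum Bochner_Integration.integrable_sum int_f)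
  also have "\<dots> = random_evolution H (distr M borel c) \<rho>"
    unfolding random_evolution_def char f_def
    by (intro sum.cong refl integral_bounded_linear[OF bounded_linear_cscale_left int])
  finally show ?thesis .
qed

lemma random_evolution_add:
  "random_evolution H D (A + B) = random_evolution H D A + random_evolution H D B"
  by (simp add: matrix_eq random_evolution_matrix_vector_mult matrix_vector_mult_add_rdistrib
      eigencomponent_add[OF h] vector_add_ldistrib sum.distrib)

lemma random_evolution_cscale: "random_evolution H D (cscale c A) = cscale c (random_evolution H D A)"
  by (simp add: matrix_eq random_evolution_matrix_vector_mult cscale_matrix_vector_mult
      eigencomponent_smult[OF h] vector_smult_assoc mult.commute vec.scale_sum_right)

context
  fixes D :: "real measure"
  assumes D: "real_distribution D"
begin

lemma trace_random_evolution: "trace (random_evolution H D A) = trace A"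
proof -
  have diag: "trace (eigenprojector H \<mu> ** A ** eigenprojector H \<nu>)
      = (if \<mu> = \<nu> then trace (eigenprojector H \<mu> ** A) else 0)" for \<mu> \<nu>
    by (subst trace_mult_commute)
       (auto simp: matrix_mul_assoc eigenprojector_mult[OF h] trace_0[simplified])
  have "trace (random_evolution H D A) = (\<Sum>\<mu>\<in>eigenvalues H. \<Sum>\<nu>\<in>eigenvalues H.
      char D (\<nu> - \<mu>) * (if \<mu> = \<nu> then trace (eigenprojector H \<mu> ** A) else 0))"
    by (simp add: random_evolution_def trace_sum trace_cscale diag)
  also have "\<dots> = trace ((\<Sum>\<mu>\<in>eigenvalues H. eigenprojector H \<mu>) ** A)"
    using finite_eigenvalues[OF h] real_distribution.char_zero[OF D]
    by (simp add: if_distrib sum_matrix_mult trace_sum cong: if_cong)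
  finally show ?thesis by (simp add: sum_eigenprojector[OF h])
qed

text \<open>The block quadratic form of \<open>id \<otimes> R\<close> is the \<open>D\<close>-average of the block form of the
  original operator evaluated at the rotated vectors \<open>exp(iHs) v\<^sub>a\<close>.\<close>

lemma block_form_random_evolution:
  fixes X :: "nat \<Rightarrow> nat \<Rightarrow> complex^'n^'n" and v :: "nat \<Rightarrow> complex^'n"
  defines "w s a \<equiv> \<Sum>\<mu>\<in>eigenvalues H. exp (\<i> * complex_of_real (\<mu> * s)) *s eigencomponent H \<mu> (v a)"
  shows "(\<Sum>a<k. \<Sum>b<k. cinner (v a) (random_evolution H D (X a b) *v v b))
      = (\<integral>s. (\<Sum>a<k. \<Sum>b<k. cinner (w s a) (X a b *v w s b)) \<partial>D)"
    and "integrable D (\<lambda>s. \<Sum>a<k. \<Sum>b<k. cinner (w s a) (X a b *v w s b))"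
proof -
  define C where "C a b \<mu> \<nu> =
    cinner (eigencomponent H \<mu> (v a)) (X a b *v eigencomponent H \<nu> (v b))" for a b \<mu> \<nu>
  define g where "g \<mu> s = exp (\<i> * complex_of_real (\<mu> * s))" for \<mu> s :: real
  define e where "e t s = exp (\<i> * complex_of_real (t * s))" for t s :: real
  have gg: "cnj (g \<mu> s) * g \<nu> s = e (\<nu> - \<mu>) s" for \<mu> \<nu> s
    unfolding g_def e_def by (simp add: exp_cnj exp_add[symmetric] algebra_simps)
  have form: "(\<Sum>a<k. \<Sum>b<k. cinner (w s a) (X a b *v w s b))
      = (\<Sum>a<k. \<Sum>b<k. \<Sum>\<mu>\<in>eigenvalues H. \<Sum>\<nu>\<in>eigenvalues H. e (\<nu> - \<mu>) s * C a b \<mu> \<nu>)" for s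
    unfolding w_def g_def[symmetric] C_def gg[symmetric]
    by (simp add: cinner_sum_left cinner_sum_right matrix_vector_mult_sum vector_scalar_commute
        cinner_smult_left cinner_smult_right sum_distrib_left mult.assoc)
       (rule sum.cong[OF refl], rule sum.cong[OF refl], subst sum.swap, simp add: ac_simps)
  have meas: "(\<lambda>s. complex_of_real (t * s)) \<in> borel_measurable D" for t
    by (subst measurable_cong_sets[OF real_distribution.events_eq_borel[OF D] refl]) measurable
  have int: "integrable D (e t)" for t
    unfolding e_def
    by (rule prob_space.integrable_iexp[OF real_distribution.axioms(1)[OF D] meas]) simp
  have "(\<Sum>a<k. \<Sum>b<k. cinner (v a) (random_evolution H D (X a b) *v v b))
      = (\<Sum>a<k. \<Sum>b<k. \<Sum>\<mu>\<in>eigenvalues H. \<Sum>\<nu>\<in>eigenvalues H. char D (\<nu> - \<mu>) * C a b \<mu> \<nu>)"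
    by (simp add: random_evolution_matrix_vector_mult cinner_sum_right cinner_smult_right C_def
        cinner_eigencomponent[OF h, symmetric])
  also have "\<dots> = (\<integral>s. (\<Sum>a<k. \<Sum>b<k. cinner (w s a) (X a b *v w s b)) \<partial>D)"
    unfolding form char_def e_def[symmetric] using int
    by (simp add: Bochner_Integration.integral_sum Bochner_Integration.integrable_sum)
  finally show "(\<Sum>a<k. \<Sum>b<k. cinner (v a) (random_evolution H D (X a b) *v v b))
      = (\<integral>s. (\<Sum>a<k. \<Sum>b<k. cinner (w s a) (X a b *v w s b)) \<partial>D)" .
  show "integrable D (\<lambda>s. \<Sum>a<k. \<Sum>b<k. cinner (w s a) (X a b *v w s b))"
    unfolding form using int by (simp add: Bochner_Integration.integrable_sum)
qed

lemma block_psd_random_evolution: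
  assumes X: "block_psd k X"
  shows "block_psd k (\<lambda>a b. random_evolution H D (X a b))"
  unfolding block_psd_def
proof
  fix v :: "nat \<Rightarrow> complex^'n"
  define w where
    "w s a = (\<Sum>\<mu>\<in>eigenvalues H. exp (\<i> * complex_of_real (\<mu> * s)) *s eigencomponent H \<mu> (v a))"
    for s a
  define F where "F s = (\<Sum>a<k. \<Sum>b<k. cinner (w s a) (X a b *v w s b))" for s
  have F: "Im (F s) = 0 \<and> 0 \<le> Re (F s)" for s
    using X unfolding block_psd_def F_def by blast
  note form = block_form_random_evolution[where v = v and k = k and X = X, folded w_def, folded F_def]
  show "Im (\<Sum>a<k. \<Sum>b<k. cinner (v a) (random_evolution H D (X a b) *v v b)) = 0 \<and>
        0 \<le> Re (\<Sum>a<k. \<Sum>b<k. cinner (v a) (random_evolution H D (X a b) *v v b))"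
  proof
    show "Im (\<Sum>a<k. \<Sum>b<k. cinner (v a) (random_evolution H D (X a b) *v v b)) = 0"
      unfolding form(1) integral_Im[OF form(2), symmetric] using F by simp
    show "0 \<le> Re (\<Sum>a<k. \<Sum>b<k. cinner (v a) (random_evolution H D (X a b) *v v b))"
      unfolding form(1) integral_Re[OF form(2), symmetric] using F
      by (intro Bochner_Integration.integral_nonneg) simp
  qed
qed

lemma quantum_operation_random_evolution: "quantum_operation (random_evolution H D)"
  unfolding quantum_operation_def
  using random_evolution_add random_evolution_cscale block_psd_random_evolution
    trace_random_evolution by blast

end

end

section \<open>The trace norm of a symmetric rank-two operator\<close>

lemma psd_negative_eigenvector_eq_0:
  assumes "psd B" "s > 0" "B *v d = - (complex_of_real s *s d)"
  shows "d = 0"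
proof -
  have "Re (cinner d (B *v d)) = - (s * (norm d)\<^sup>2)"
    using assms(3) by (simp add: cinner_minus_right cinner_smult_right cinner_self)
  moreover have "0 \<le> Re (cinner d (B *v d))" using assms(1) unfolding psd_def by blast
  ultimately have "s * (norm d)\<^sup>2 \<le> 0" by simp
  then show ?thesis using assms(2) by (simp add: mult_le_0_iff)
qed

text \<open>If \<open>B\<^sub>0\<close> is \<open>s\<close> times an orthogonal projection, then \<open>B\<^sub>0\<close> is the only positive square root
  of \<open>B\<^sub>0\<^sup>2\<close>: any positive root \<open>B\<close> commutes with \<open>B\<^sub>0\<close>, vanishes on \<open>ker B\<^sub>0\<close>, and on the
  range of \<open>B\<^sub>0\<close> the difference \<open>B - B\<^sub>0\<close> lands in the \<open>-s\<close>-eigenspace of \<open>B\<close>.\<close>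

lemma psd_sqrt_unique_scaled_projection:
  fixes B B0 :: "complex^'n^'n"
  assumes B: "psd B" and s: "s > 0"
    and B0_sq: "\<And>x. B0 *v (B0 *v x) = complex_of_real s *s (B0 *v x)"
    and BB: "\<And>x. B *v (B *v x) = B0 *v (B0 *v x)"
  shows "B = B0"
proof -
  have hB: "hermitian B" using B psd_imp_hermitian by blast
  have B_sq: "B *v (B *v x) = complex_of_real s *s (B0 *v x)" for x using BB B0_sq by simp
  have comm: "B *v (B0 *v x) = B0 *v (B *v x)" for x
  proof -
    have "complex_of_real s *s (B *v (B0 *v x)) = B *v (B *v (B *v x))"
      by (simp add: B_sq vector_scalar_commute)
    also have "\<dots> = complex_of_real s *s (B0 *v (B *v x))" by (rule B_sq)
    finally show ?thesis using s by simp
  qed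
  have ker: "B *v y = 0" if "B0 *v y = 0" for y
  proof -
    have "cinner (B *v y) (B *v y) = cinner y (B *v (B *v y))" by (simp add: cinner_hermitian[OF hB])
    also have "\<dots> = 0" using that by (simp add: B_sq)
    finally show ?thesis by simp
  qed
  have "B *v x = B0 *v x" for x
  proof -
    define y where "y = x - complex_of_real (1/s) *s (B0 *v x)"
    have "B0 *v y = 0"
      using s by (simp add: y_def matrix_vector_mult_diff_distrib vector_scalar_commute B0_sq
          vector_smult_assoc)
    then have "B *v y = 0" by (rule ker)
    then have Bx: "B *v x = complex_of_real (1/s) *s (B0 *v (B *v x))"
      by (simp add: y_def matrix_vector_mult_diff_distrib vector_scalar_commute comm)
    have B0Bx: "B0 *v (B *v x) = complex_of_real s *s (B *v x)"
      using s by (subst (2) Bx) (simp add: vector_scalar_commute B0_sq vector_smult_assoc)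
    define d where "d = B *v x - B0 *v x"
    have "B0 *v d = complex_of_real s *s d"
      by (simp add: d_def B0Bx matrix_vector_mult_diff_distrib B0_sq vector_ssub_ldistrib)
    moreover have "B *v d + B0 *v d = 0"
      by (simp add: d_def matrix_vector_mult_diff_distrib BB comm)
    ultimately have "B *v d = - (complex_of_real s *s d)"
      by (simp add: eq_neg_iff_add_eq_0)
    then have "d = 0" by (rule psd_negative_eigenvector_eq_0[OF B s])
    then show ?thesis by (simp add: d_def)
  qed
  then show ?thesis by (simp add: matrix_eq)
qed

lemma mabs_eq_scaled_projection:
  fixes A B0 :: "complex^'n^'n"
  assumes "psd B0" "s > 0" "\<And>x. B0 *v (B0 *v x) = complex_of_real s *s (B0 *v x)"
    and "B0 ** B0 = cadj A ** A"
  shows "mabs A = B0"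
  unfolding mabs_def
proof (rule the_equality)
  show "psd B0 \<and> B0 ** B0 = cadj A ** A" using assms by blast
  show "B = B0" if B: "psd B \<and> B ** B = cadj A ** A" for B
  proof (rule psd_sqrt_unique_scaled_projection[OF _ assms(2,3)])
    show "psd B" using B by blast
    show "B *v (B *v x) = B0 *v (B0 *v x)" for x
      using B assms(4) by (simp add: matrix_vector_mul_assoc)
  qed
qed

lemma mabs_0: "mabs (0 :: complex^'n^'n) = 0"
  unfolding mabs_def
proof (rule the_equality)
  show "psd 0 \<and> (0::complex^'n^'n) ** 0 = cadj 0 ** 0" by (simp add: psd_def)
  fix B :: "complex^'n^'n"
  assume B: "psd B \<and> B ** B = cadj 0 ** 0"
  then have hB: "hermitian B" using psd_imp_hermitian by blast
  have "B *v x = 0" for x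
  proof -
    have "cinner (B *v x) (B *v x) = cinner x ((B ** B) *v x)"
      by (simp add: cinner_hermitian[OF hB] matrix_vector_mul_assoc[symmetric])
    then show ?thesis using B by simp
  qed
  then show "B = 0" by (simp add: matrix_eq)
qed

context
  fixes \<psi> b :: "complex^'n"
  assumes \<psi>: "cinner \<psi> \<psi> = 1" and \<psi>b: "cinner \<psi> b = 0"
begin

lemma mabs_outer_sym:
  assumes "b \<noteq> 0"
  shows "mabs (- (outer \<psi> b + outer b \<psi>))
    = cscale (complex_of_real (norm b)) (outer \<psi> \<psi>) + cscale (complex_of_real (1 / norm b)) (outer b b)"
proof -
  define G where "G = outer \<psi> b + outer b \<psi>"
  define s where "s = norm b"
  define B0 where "B0 = cscale (complex_of_real s) (outer \<psi> \<psi>) + cscale (complex_of_real (1/s)) (outer b b)"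
  have s: "s > 0" using assms by (simp add: s_def)
  have b\<psi>: "cinner b \<psi> = 0" using cinner_eq_0_commute[OF \<psi>b] .
  have bb: "cinner b b = complex_of_real (s\<^sup>2)" by (simp add: s_def cinner_self)
  have G: "G *v x = cinner b x *s \<psi> + cinner \<psi> x *s b" for x
    by (simp add: G_def outer_matrix_vector_mult matrix_vector_mult_add_rdistrib)
  have "cadj (- G) = - G"
    by (rule cadj_eqI)
       (simp add: uminus_matrix_vector_mult G cinner_simps, subst (1 2) cinner_commute,
        simp add: algebra_simps)
  then have GG: "(cadj (- G) ** (- G)) *v x
      = complex_of_real (s\<^sup>2) *s (cinner \<psi> x *s \<psi>) + cinner b x *s b" for x
    by (simp add: matrix_vector_mul_assoc[symmetric] uminus_matrix_vector_mult vec.neg G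
        matrix_vector_right_distrib vector_scalar_commute cinner_simps \<psi> \<psi>b b\<psi> bb)
  have B0: "B0 *v x = complex_of_real s *s (cinner \<psi> x *s \<psi>)
      + complex_of_real (1/s) *s (cinner b x *s b)" for x
    by (simp add: B0_def matrix_vector_mult_add_rdistrib cscale_matrix_vector_mult outer_matrix_vector_mult)
  have B0_sq: "B0 *v (B0 *v x) = complex_of_real s *s (B0 *v x)" for x
    using s by (simp add: B0 matrix_vector_right_distrib vector_scalar_commute cinner_simps \<psi> \<psi>b b\<psi> bb
        vector_smult_assoc vector_add_ldistrib power2_eq_square field_simps)
  have B0_psd: "psd B0"
    unfolding B0_def using s by (intro psd_add psd_cscale_outer) auto
  have "B0 *v (B0 *v x) = (cadj (- G) ** (- G)) *v x" for x
    unfolding B0_sq GG using s by (simp add: B0 vector_add_ldistrib vector_smult_assoc power2_eq_square)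
  then have "B0 ** B0 = cadj (- G) ** (- G)" by (simp add: matrix_eq matrix_vector_mul_assoc[symmetric])
  then have "mabs (- G) = B0" by (rule mabs_eq_scaled_projection[OF B0_psd s B0_sq])
  then show ?thesis by (simp only: G_def B0_def s_def)
qed

lemma trace_norm_outer_sym: "trace_norm (- (outer \<psi> b + outer b \<psi>)) = 2 * norm b"
proof (cases "b = 0")
  case True
  then have "outer \<psi> b + outer b \<psi> = 0" by (simp add: outer_def vec_eq_iff)
  then show ?thesis using True by (simp add: trace_norm_def mabs_0 trace_0[simplified])
next
  case False
  then show ?thesis
    unfolding trace_norm_def mabs_outer_sym[OF False]
    by (simp add: trace_add trace_cscale trace_outer \<psi> cinner_self[of b] power2_eq_square)
qed

end

section \<open>Off-diagonal part of a density matrix\<close>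

lemma Re_cinner_orthonormal_pair_le_trace:
  assumes \<rho>: "psd \<rho>" and ee: "cinner e e = 1" and ff: "cinner f f = 1" and ef: "cinner e f = 0"
  shows "Re (cinner e (\<rho> *v e)) + Re (cinner f (\<rho> *v f)) \<le> Re (trace \<rho>)"
proof -
  have fe: "cinner f e = 0" using cinner_eq_0_commute[OF ef] .
  define Q where "Q = mat 1 - outer e e - outer f f"
  have Q: "Q *v x = x - cinner e x *s e - cinner f x *s f" for x
    by (simp add: Q_def matrix_vector_mult_diff_rdistrib outer_matrix_vector_mult)
  have QQ: "Q ** Q = Q"
    by (simp add: matrix_eq matrix_vector_mul_assoc[symmetric] Q matrix_vector_mult_diff_distrib
        cinner_simps ee ff ef fe)
  have Q_adj: "cinner (Q *v x) y = cinner x (Q *v y)" for x y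
    by (simp add: Q cinner_simps, subst (1 2) cinner_commute[of _ x], simp add: mult.commute)
  have "psd (Q ** \<rho> ** Q)"
    using \<rho> by (simp add: psd_def matrix_vector_mul_assoc[symmetric] Q_adj[symmetric])
  moreover have "trace \<rho> = cinner e (\<rho> *v e) + cinner f (\<rho> *v f) + trace (Q ** \<rho> ** Q)"
  proof -
    have "trace \<rho> = trace (\<rho> ** (outer e e + outer f f + Q))" by (simp add: Q_def)
    also have "\<dots> = cinner e (\<rho> *v e) + cinner f (\<rho> *v f) + trace (\<rho> ** Q)"
      by (simp add: matrix_add_ldistrib trace_add trace_mult_outer)
    also have "trace (\<rho> ** Q) = trace (Q ** \<rho> ** Q)"
      by (metis QQ matrix_mul_assoc trace_mult_commute)
    finally show ?thesis .
  qed
  ultimately show ?thesis using trace_psd_nonneg by fastforce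
qed

lemma nonneg_quadratic_form_imp_le:
  fixes a m c :: real
  assumes "\<And>\<alpha> \<beta>. 0 \<le> \<alpha>\<^sup>2 * a + 2 * \<alpha> * \<beta> * m + \<beta>\<^sup>2 * c" "0 \<le> a" "0 \<le> c"
  shows "m\<^sup>2 \<le> a * c"
proof (cases "c = 0")
  case False
  then have c: "c > 0" using assms by simp
  have "0 \<le> c\<^sup>2 * a + 2 * c * (- m) * m + (- m)\<^sup>2 * c" using assms(1) by blast
  then have "0 \<le> c * (c * a - m\<^sup>2)" by (simp add: power2_eq_square algebra_simps)
  then show ?thesis using c by (simp add: zero_le_mult_iff mult.commute)
next
  case True
  have "0 \<le> m\<^sup>2 * a + 2 * m * (- (a + 1)) * m + (- (a + 1))\<^sup>2 * c" using assms(1) by blast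
  then have "m\<^sup>2 * (a + 2) \<le> 0" using True by (simp add: power2_eq_square algebra_simps)
  then show ?thesis using True assms(2) by (simp add: mult_le_0_iff)
qed

text \<open>With \<open>a = \<langle>\<psi>, \<rho>\<psi>\<rangle>\<close>, \<open>w = \<rho>\<psi> - a\<psi>\<close>, \<open>m = \<parallel>w\<parallel>\<^sup>2\<close> and \<open>f = w / \<parallel>w\<parallel>\<close>, positivity of \<open>\<rho>\<close> on
  \<open>span {\<psi>, w}\<close> gives \<open>m\<^sup>2 \<le> a \<langle>w, \<rho>w\<rangle>\<close> and the trace bound gives \<open>a + \<langle>f, \<rho>f\<rangle> \<le> 1\<close>;
  together \<open>m \<le> a (1 - a) \<le> 1/4\<close>.\<close>

lemma norm_density_off_diagonal_le:
  assumes \<rho>: "density \<rho>" and \<psi>: "cinner \<psi> \<psi> = 1"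
  shows "norm (\<rho> *v \<psi> - cinner \<psi> (\<rho> *v \<psi>) *s \<psi>) \<le> 1/2"
proof -
  have psd: "psd \<rho>" and tr: "trace \<rho> = 1" using \<rho> by (auto simp: density_def)
  have h: "hermitian \<rho>" using psd psd_imp_hermitian by blast
  define a where "a = Re (cinner \<psi> (\<rho> *v \<psi>))"
  have \<psi>\<rho>\<psi>: "cinner \<psi> (\<rho> *v \<psi>) = complex_of_real a"
    using Im_cinner_hermitian[OF h, of \<psi>] by (simp add: a_def complex_eq_iff)
  have a: "0 \<le> a" using psd unfolding psd_def a_def by blast
  define w where "w = \<rho> *v \<psi> - complex_of_real a *s \<psi>"
  have \<psi>w: "cinner \<psi> w = 0" by (simp add: w_def cinner_simps \<psi>\<rho>\<psi> \<psi>)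
  have w\<psi>: "cinner w \<psi> = 0" using cinner_eq_0_commute[OF \<psi>w] .
  define m where "m = (norm w)\<^sup>2"
  have ww: "cinner w w = complex_of_real m" by (simp add: m_def cinner_self)
  have m: "0 \<le> m" by (simp add: m_def)
  have \<rho>\<psi>: "\<rho> *v \<psi> = w + complex_of_real a *s \<psi>" by (simp add: w_def)
  have w\<rho>\<psi>: "cinner w (\<rho> *v \<psi>) = complex_of_real m"
    by (simp add: \<rho>\<psi> cinner_simps ww w\<psi>)
  have \<psi>\<rho>w: "cinner \<psi> (\<rho> *v w) = complex_of_real m"
    by (simp add: cinner_hermitian[OF h, symmetric] \<rho>\<psi> cinner_simps ww \<psi>w)
  define c where "c = Re (cinner w (\<rho> *v w))"
  have c: "0 \<le> c" using psd unfolding psd_def c_def by blast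
  have "0 \<le> \<alpha>\<^sup>2 * a + 2 * \<alpha> * \<beta> * m + \<beta>\<^sup>2 * c" for \<alpha> \<beta>
  proof -
    let ?x = "complex_of_real \<alpha> *s \<psi> + complex_of_real \<beta> *s w"
    have "0 \<le> Re (cinner ?x (\<rho> *v ?x))" using psd unfolding psd_def by blast
    also have "Re (cinner ?x (\<rho> *v ?x)) = \<alpha>\<^sup>2 * a + 2 * \<alpha> * \<beta> * m + \<beta>\<^sup>2 * c"
      by (simp add: matrix_vector_right_distrib vector_scalar_commute cinner_simps \<psi>\<rho>\<psi> w\<rho>\<psi> \<psi>\<rho>w
          c_def power2_eq_square algebra_simps)
    finally show ?thesis .
  qed
  then have mac: "m\<^sup>2 \<le> a * c" using nonneg_quadratic_form_imp_le a c by blast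
  have "m \<le> 1/4"
  proof (cases "m = 0")
    case False
    then have m: "m > 0" using m by simp
    define f where "f = complex_of_real (1 / sqrt m) *s w"
    have "complex_of_real (sqrt m) * complex_of_real (sqrt m) = complex_of_real m"
      using m by (simp flip: of_real_mult)
    then have ff: "cinner f f = 1" using m by (simp add: f_def cinner_simps ww)
    have \<psi>f: "cinner \<psi> f = 0" by (simp add: f_def cinner_simps \<psi>w)
    have "Re (cinner f (\<rho> *v f)) = c / m"
      using m by (simp add: f_def cinner_simps vector_scalar_commute c_def)
    then have "a + c / m \<le> 1"
      using Re_cinner_orthonormal_pair_le_trace[OF psd \<psi> ff \<psi>f] tr by (simp add: a_def)
    then have "c \<le> (1 - a) * m" using m by (simp add: field_simps)
    then have "a * c \<le> a * ((1 - a) * m)" using a by (rule mult_left_mono)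
    then have "m * m \<le> m * (a * (1 - a))" using mac by (simp add: power2_eq_square algebra_simps)
    then have "m \<le> a * (1 - a)" using m by simp
    also have "\<dots> \<le> 1/4" using zero_le_power2[of "a - 1/2"] by (simp add: power2_eq_square algebra_simps)
    finally show ?thesis .
  qed simp
  then have "(norm w)\<^sup>2 \<le> (1/2)\<^sup>2" by (simp add: m_def power2_eq_square)
  then have "norm w \<le> 1/2" by (rule power2_le_imp_le) simp
  then show ?thesis by (simp add: w_def \<psi>\<rho>\<psi>)
qed

section \<open>Pinching onto a nondegenerate eigenvector\<close>

lemma sum_split_diagonal_pair:
  assumes "finite S" "e \<in> S"
  shows "(\<Sum>\<mu>\<in>S. \<Sum>\<nu>\<in>S. f \<mu> \<nu>) = f e e + (\<Sum>\<nu>\<in>S-{e}. f e \<nu>) + (\<Sum>\<mu>\<in>S-{e}. f \<mu> e)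
     + (\<Sum>\<mu>\<in>S-{e}. \<Sum>\<nu>\<in>S-{e}. (f \<mu> \<nu> :: 'a::comm_monoid_add))"
  by (simp add: sum.remove[OF assms] sum.distrib ac_simps)

text \<open>The vector \<open>b\<close> of the proof sketch at the top.\<close>

definition damped_coherence ::
  "complex^'n^'n \<Rightarrow> real measure \<Rightarrow> real \<Rightarrow> complex^'n^'n \<Rightarrow> complex^'n \<Rightarrow> complex^'n" where
  "damped_coherence H D E0 \<rho> \<psi> =
     (\<Sum>\<mu>\<in>eigenvalues H - {E0}. char D (E0 - \<mu>) *s eigencomponent H \<mu> (\<rho> *v \<psi>))"

context
  fixes H :: "complex^'n^'n" and \<psi> :: "complex^'n" and E0 :: real
  assumes h: "hermitian H" and \<psi>: "in_eigenspace H E0 \<psi>" "cinner \<psi> \<psi> = 1"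
    and nondeg: "\<And>v. in_eigenspace H E0 v \<Longrightarrow> \<exists>c. v = c *s \<psi>"
begin

lemma eigenvalue_nondegenerate: "E0 \<in> eigenvalues H"
proof -
  have "\<psi> \<noteq> 0" using \<psi>(2) by auto
  then show ?thesis using \<psi>(1) unfolding eigenvalues_def by blast
qed

lemma eigencomponent_nondegenerate_vector: "eigencomponent H \<mu> \<psi> = (if \<mu> = E0 then \<psi> else 0)"
  by (rule eigencomponent_in_eigenspace[OF h \<psi>(1)])

lemma eigencomponent_nondegenerate_eigenvalue: "eigencomponent H E0 x = cinner \<psi> x *s \<psi>"
proof -
  obtain k where k: "eigencomponent H E0 x = k *s \<psi>"
    using nondeg in_eigenspace_eigencomponent[OF h] by blast
  have "cinner \<psi> (eigencomponent H E0 x) = cinner (eigencomponent H E0 \<psi>) x"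
    by (rule cinner_eigencomponent[OF h, symmetric])
  then have "k = cinner \<psi> x" using k by (simp add: eigencomponent_nondegenerate_vector cinner_smult_right \<psi>)
  then show ?thesis using k by simp
qed

lemma eigencomponent_complement:
  "eigencomponent H \<mu> ((mat 1 - outer \<psi> \<psi>) *v y) = (if \<mu> = E0 then 0 else eigencomponent H \<mu> y)"
  by (simp add: matrix_vector_mult_diff_rdistrib outer_matrix_vector_mult eigencomponent_diff[OF h]
      eigencomponent_smult[OF h] eigencomponent_nondegenerate_vector eigencomponent_nondegenerate_eigenvalue)

lemma complement_eigencomponent:
  "(mat 1 - outer \<psi> \<psi>) *v eigencomponent H \<nu> x = (if \<nu> = E0 then 0 else eigencomponent H \<nu> x)"
proof -
  have "cinner \<psi> (eigencomponent H \<nu> x) = cinner (eigencomponent H \<nu> \<psi>) x"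
    by (rule cinner_eigencomponent[OF h, symmetric])
  then show ?thesis
    by (simp add: matrix_vector_mult_diff_rdistrib outer_matrix_vector_mult
        eigencomponent_nondegenerate_vector eigencomponent_nondegenerate_eigenvalue)
qed

lemma cinner_damped_coherence: "cinner \<psi> (damped_coherence H D E0 \<rho> \<psi>) = 0"
  by (auto simp: damped_coherence_def cinner_sum_right cinner_smult_right
      cinner_eigencomponent[OF h, symmetric] eigencomponent_nondegenerate_vector intro!: sum.neutral)

lemma norm_damped_coherence_le:
  assumes "\<And>\<mu>. \<mu> \<in> eigenvalues H - {E0} \<Longrightarrow> cmod (char D (E0 - \<mu>)) \<le> c" "0 \<le> c"
  shows "norm (damped_coherence H D E0 \<rho> \<psi>) \<le> c * norm (\<rho> *v \<psi> - cinner \<psi> (\<rho> *v \<psi>) *s \<psi>)"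
proof -
  have "\<rho> *v \<psi> = (\<Sum>\<mu>\<in>eigenvalues H. eigencomponent H \<mu> (\<rho> *v \<psi>))"
    by (rule sum_eigencomponent[OF h, symmetric])
  also have "\<dots> = cinner \<psi> (\<rho> *v \<psi>) *s \<psi> + (\<Sum>\<mu>\<in>eigenvalues H - {E0}. eigencomponent H \<mu> (\<rho> *v \<psi>))"
    by (simp add: sum.remove[OF finite_eigenvalues[OF h] eigenvalue_nondegenerate]
        eigencomponent_nondegenerate_eigenvalue)
  finally have off_diagonal: "(\<Sum>\<mu>\<in>eigenvalues H - {E0}. eigencomponent H \<mu> (\<rho> *v \<psi>))
      = \<rho> *v \<psi> - cinner \<psi> (\<rho> *v \<psi>) *s \<psi>" by (metis add_diff_cancel_left')
  have "norm (damped_coherence H D E0 \<rho> \<psi>)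
      \<le> c * norm (\<Sum>\<mu>\<in>eigenvalues H - {E0}. eigencomponent H \<mu> (\<rho> *v \<psi>))"
    unfolding damped_coherence_def by (rule norm_weighted_eigencomponents_le[OF h Diff_subset assms])
  then show ?thesis by (simp only: off_diagonal)
qed

lemma pinching_minus_random_evolution:
  assumes \<rho>: "hermitian \<rho>" and D: "real_distribution D"
  shows "outer \<psi> \<psi> ** \<rho> ** outer \<psi> \<psi>
      + random_evolution H D ((mat 1 - outer \<psi> \<psi>) ** \<rho> ** (mat 1 - outer \<psi> \<psi>))
      - random_evolution H D \<rho>
    = - (outer \<psi> (damped_coherence H D E0 \<rho> \<psi>) + outer (damped_coherence H D E0 \<rho> \<psi>) \<psi>)"
proof -
  define b where "b = damped_coherence H D E0 \<rho> \<psi>"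
  define S where "S = eigenvalues H - {E0}"
  define T where "T \<mu> \<nu> x = char D (\<nu> - \<mu>) *s eigencomponent H \<mu> (\<rho> *v eigencomponent H \<nu> x)"
    for \<mu> \<nu> x
  note split = sum_split_diagonal_pair[OF finite_eigenvalues[OF h] eigenvalue_nondegenerate,
      folded S_def]
  have P: "(outer \<psi> \<psi> ** \<rho> ** outer \<psi> \<psi>) *v x = T E0 E0 x" for x
    using real_distribution.char_zero[OF D]
    by (simp add: T_def eigencomponent_nondegenerate_eigenvalue matrix_vector_mul_assoc[symmetric]
        outer_matrix_vector_mult)
  have R_complement: "random_evolution H D ((mat 1 - outer \<psi> \<psi>) ** \<rho> ** (mat 1 - outer \<psi> \<psi>)) *v x
      = (\<Sum>\<mu>\<in>S. \<Sum>\<nu>\<in>S. T \<mu> \<nu> x)" for x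
  proof -
    have "random_evolution H D ((mat 1 - outer \<psi> \<psi>) ** \<rho> ** (mat 1 - outer \<psi> \<psi>)) *v x
        = (\<Sum>\<mu>\<in>eigenvalues H. \<Sum>\<nu>\<in>eigenvalues H. (if \<mu> = E0 \<or> \<nu> = E0 then 0 else T \<mu> \<nu> x))"
      unfolding random_evolution_matrix_vector_mult[OF h]
      by (intro sum.cong refl)
         (auto simp: matrix_vector_mul_assoc[symmetric] eigencomponent_complement
           complement_eigencomponent T_def eigencomponent_0[OF h])
    then show ?thesis unfolding split by (auto intro!: sum.cong simp: S_def)
  qed
  have R: "random_evolution H D \<rho> *v x = (\<Sum>\<mu>\<in>eigenvalues H. \<Sum>\<nu>\<in>eigenvalues H. T \<mu> \<nu> x)" for x
    by (simp add: random_evolution_matrix_vector_mult[OF h] T_def)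
  have row: "(\<Sum>\<nu>\<in>S. T E0 \<nu> x) = cinner b x *s \<psi>" for x
  proof -
    have "cinner b x = (\<Sum>\<mu>\<in>S. char D (\<mu> - E0) * cinner \<psi> (\<rho> *v eigencomponent H \<mu> x))"
      by (simp add: b_def S_def damped_coherence_def cinner_sum_left cinner_smult_left char_cnj
          cinner_eigencomponent[OF h] cinner_hermitian[OF \<rho>])
    then show ?thesis
      by (simp add: T_def eigencomponent_nondegenerate_eigenvalue vec.scale_sum_left vector_smult_assoc)
  qed
  have column: "(\<Sum>\<mu>\<in>S. T \<mu> E0 x) = cinner \<psi> x *s b" for x
    by (simp add: T_def S_def b_def damped_coherence_def eigencomponent_nondegenerate_eigenvalue
        vector_scalar_commute eigencomponent_smult[OF h] vec.scale_sum_right vector_smult_assoc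
        mult.commute)
  show ?thesis
    unfolding matrix_eq b_def[symmetric] matrix_vector_mult_diff_rdistrib
      matrix_vector_mult_add_rdistrib uminus_matrix_vector_mult P R_complement R split row column
    by (simp add: outer_matrix_vector_mult algebra_simps)
qed

lemma trace_norm_pinching_minus_random_evolution_le:
  assumes \<rho>: "density \<rho>" and D: "real_distribution D" and c: "0 \<le> c"
    and char_le: "\<And>\<mu>. \<mu> \<in> eigenvalues H - {E0} \<Longrightarrow> cmod (char D (E0 - \<mu>)) \<le> c"
  shows "trace_norm (outer \<psi> \<psi> ** \<rho> ** outer \<psi> \<psi>
      + random_evolution H D ((mat 1 - outer \<psi> \<psi>) ** \<rho> ** (mat 1 - outer \<psi> \<psi>))
      - random_evolution H D \<rho>) \<le> c"
proof -
  have "hermitian \<rho>" using \<rho> by (simp add: density_def psd_imp_hermitian)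
  define b where "b = damped_coherence H D E0 \<rho> \<psi>"
  have "norm b \<le> c * norm (\<rho> *v \<psi> - cinner \<psi> (\<rho> *v \<psi>) *s \<psi>)"
    unfolding b_def using char_le c by (rule norm_damped_coherence_le)
  also have "\<dots> \<le> c * (1/2)"
    by (rule mult_left_mono[OF norm_density_off_diagonal_le[OF \<rho> \<psi>(2)] c])
  finally have "norm b \<le> c * (1/2)" .
  moreover have "trace_norm (- (outer \<psi> b + outer b \<psi>)) = 2 * norm b"
    unfolding b_def by (rule trace_norm_outer_sym[OF \<psi>(2) cinner_damped_coherence])
  ultimately show ?thesis
    unfolding pinching_minus_random_evolution[OF \<open>hermitian \<rho>\<close> D] b_def[symmetric] by simp
qed

end

section \<open>Characteristic-function bounds\<close>

lemma (in prob_space) char_distr_sum_iid: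
  assumes "indep_vars (\<lambda>_. borel) X {..<n}" "\<forall>i<n. distr M borel (X i) = distr M borel T"
  shows "char (distr M borel (\<lambda>x. \<Sum>i<n. X i x)) t = char (distr M borel T) t ^ n"
  using char_distr_sum[OF assms(1)] assms(2) by simp

lemma finite_Sup_image_bounds:
  fixes f :: "'a \<Rightarrow> real"
  assumes "finite \<Omega>" "\<And>\<omega>. 0 \<le> f \<omega>"
  shows "0 \<le> (if \<Omega> = {} then 0 else Sup (f ` \<Omega>))"
    and "\<omega> \<in> \<Omega> \<Longrightarrow> f \<omega> \<le> (if \<Omega> = {} then 0 else Sup (f ` \<Omega>))"
proof -
  show le: "f \<omega> \<le> (if \<Omega> = {} then 0 else Sup (f ` \<Omega>))" if "\<omega> \<in> \<Omega>" for \<omega>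
    using that assms(1) by (auto intro: cSup_upper)
  show "0 \<le> (if \<Omega> = {} then 0 else Sup (f ` \<Omega>))"
  proof (cases "\<Omega> = {}")
    case False
    then obtain \<omega> where "\<omega> \<in> \<Omega>" by blast
    then show ?thesis using le[of \<omega>] assms(2)[of \<omega>] by linarith
  qed simp
qed

lemma Sup_eigenvalue_gaps_bounds:
  fixes H :: "complex^'n^'n" and f :: "real \<Rightarrow> real"
  assumes h: "hermitian H" and f: "\<And>\<omega>. 0 \<le> f \<omega>"
    and \<epsilon>: "\<epsilon> = (let \<Omega> = {E0 - \<mu> | \<mu>. \<mu> \<noteq> E0 \<and> (\<exists>v. v \<noteq> 0 \<and> H *v v = complex_of_real \<mu> *s v)}
                 in if \<Omega> = {} then 0 else Sup (f ` \<Omega>))"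
  shows "0 \<le> \<epsilon>" and "\<mu> \<in> eigenvalues H - {E0} \<Longrightarrow> f (E0 - \<mu>) \<le> \<epsilon>"
proof -
  define \<Omega> where "\<Omega> = (\<lambda>\<mu>. E0 - \<mu>) ` (eigenvalues H - {E0})"
  have "{E0 - \<mu> | \<mu>. \<mu> \<noteq> E0 \<and> (\<exists>v. v \<noteq> 0 \<and> H *v v = complex_of_real \<mu> *s v)} = \<Omega>"
    unfolding \<Omega>_def eigenvalues_def in_eigenspace_def by blast
  then have \<epsilon>_eq: "\<epsilon> = (if \<Omega> = {} then 0 else Sup (f ` \<Omega>))"
    using \<epsilon> by (simp only: Let_def)
  have "finite \<Omega>" unfolding \<Omega>_def using finite_eigenvalues[OF h] by simp
  note bounds = finite_Sup_image_bounds[where f = f, OF this f]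
  show "0 \<le> \<epsilon>" using bounds(1) \<epsilon>_eq by simp
  show "f (E0 - \<mu>) \<le> \<epsilon>" if "\<mu> \<in> eigenvalues H - {E0}"
  proof -
    have "E0 - \<mu> \<in> \<Omega>" using that by (simp add: \<Omega>_def)
    from bounds(2)[OF this] show ?thesis using \<epsilon>_eq by simp
  qed
qed

theorem lemma2:
  fixes H :: "complex^'n^'n" and \<psi> :: "complex^'n" and E0 :: real
    and M :: "'a measure" and T :: "'a \<Rightarrow> real" and X :: "nat \<Rightarrow> 'a \<Rightarrow> real"
    and n :: nat and \<epsilon> :: real
  assumes herm: "hermitian H"
    and eig: "H *v \<psi> = complex_of_real E0 *s \<psi>" and unit: "norm \<psi> = 1"
    and nondeg: "\<forall>v. H *v v = complex_of_real E0 *s v \<longrightarrow> (\<exists>c. v = c *s \<psi>)"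
    and prob: "prob_space M"
    and T_rv: "T \<in> borel_measurable M"
    and eps: "\<epsilon> = (let \<Omega> = {E0 - \<mu> | \<mu>. \<mu> \<noteq> E0 \<and>
                        (\<exists>v. v \<noteq> 0 \<and> H *v v = complex_of_real \<mu> *s v)}
                 in if \<Omega> = {} then 0
                    else Sup ((\<lambda>\<omega>. cmod (char (distr M borel T) \<omega>)) ` \<Omega>))"
    and n: "n \<ge> 1"
    and X_rv: "\<forall>i<n. X i \<in> borel_measurable M"
    and X_indep: "prob_space.indep_vars M (\<lambda>_. borel) X {..<n}"
    and X_copies: "\<forall>i<n. distr M borel (X i) = distr M borel T"
  shows "\<exists>\<E>. quantum_operation \<E> \<and>
     (\<forall>\<rho>. density \<rho> \<longrightarrow>
        trace_norm (
          (outer \<psi> \<psi> ** \<rho> ** outer \<psi> \<psi>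
            + \<E> ((mat 1 - outer \<psi> \<psi>) ** \<rho> ** (mat 1 - outer \<psi> \<psi>)))
          - (\<integral>x. mexp (cscale (- \<i> * complex_of_real (\<Sum>i<n. X i x)) H) ** \<rho>
                   ** mexp (cscale (\<i> * complex_of_real (\<Sum>i<n. X i x)) H) \<partial>M))
        \<le> \<epsilon> ^ n)"
proof (intro exI conjI allI impI)
  define D where "D = distr M borel (\<lambda>x. \<Sum>i<n. X i x)"
  have sum_rv: "(\<lambda>x. \<Sum>i<n. X i x) \<in> borel_measurable M"
    using X_rv by (intro borel_measurable_sum) auto
  have D: "real_distribution D"
    unfolding D_def using prob sum_rv by (intro prob_space.real_distribution_distr) auto
  have \<psi>: "in_eigenspace H E0 \<psi>" "cinner \<psi> \<psi> = 1"
    and nondeg': "\<And>v. in_eigenspace H E0 v \<Longrightarrow> \<exists>c. v = c *s \<psi>"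
    using eig unit nondeg by (simp_all add: in_eigenspace_def cinner_self)
  note \<epsilon> = Sup_eigenvalue_gaps_bounds[where f = "\<lambda>\<omega>. cmod (char (distr M borel T) \<omega>)",
      OF herm norm_ge_zero eps]
  have char_D: "cmod (char D (E0 - \<mu>)) \<le> \<epsilon> ^ n" if "\<mu> \<in> eigenvalues H - {E0}" for \<mu>
    unfolding D_def prob_space.char_distr_sum_iid[OF prob X_indep X_copies] norm_power
    using \<epsilon> that by (intro power_mono) auto
  show "quantum_operation (random_evolution H D)"
    by (rule quantum_operation_random_evolution[OF herm D])
  show "trace_norm (outer \<psi> \<psi> ** \<rho> ** outer \<psi> \<psi>
      + random_evolution H D ((mat 1 - outer \<psi> \<psi>) ** \<rho> ** (mat 1 - outer \<psi> \<psi>))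
      - (\<integral>x. mexp (cscale (- \<i> * complex_of_real (\<Sum>i<n. X i x)) H) ** \<rho>
            ** mexp (cscale (\<i> * complex_of_real (\<Sum>i<n. X i x)) H) \<partial>M)) \<le> \<epsilon> ^ n"
    if "density \<rho>" for \<rho>
    unfolding integral_mexp_conjugation[OF herm prob sum_rv] D_def[symmetric]
    using \<epsilon>(1) by (intro trace_norm_pinching_minus_random_evolution_le[OF herm \<psi> nondeg' that D
        zero_le_power char_D])
qed

end
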